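(* For every vertex $\mathbf{x}$ of $P^n_{\mathrm{SEP}}$, the optimal values of the linear programs $\mathcal{D}\mathrm{OPT}^+(\mathbf{x})$ and $\mathcal{D}\mathrm{OPT}^{\mathrm{II}}(\mathbf{x})$ coincide.
   Context: $K_n=(V_n,E_n)$ is the complete undirected graph on $n$ nodes; $\delta(S)$ is the set of edges with exactly one endpoint in $S$. $P^n_{\mathrm{SEP}}=\{\mathbf{x}\in\mathbb{R}^{E_n} : \sum_{e\in\delta(v)}x_e=2\ \forall v;\ \sum_{e\in\delta(S)}x_e\ge 2\ \forall S \text{ with } 3\le|S|\le n-3;\ 0\le x_e\le 1\}$; a vertex is an extreme point. The support graph of $\mathbf{x}$ is $G_{\mathbf{x}}=(V_n,E_{\mathbf{x}})$ with $E_{\mathbf{x}}=\{e:x_e>0\}$. A tour is a Hamiltonian cycle of $K_n$, identified with its 0/1 characteristic vector $\mathbf{t}$. A walk on a graph $G$ is a closed walk visiting every node at least once; it is identified with its characteristic vector $\mathbf{w}$, where $w_{ij}$ is the number of times the edge $ij$ is traversed, and only walks with $w_{ij}\in\{0,1,2\}$ for all edges are considered (so there are finitely many). Edges are unordered ($ij=ji$), and accordingly $\lambda_{ijk}$ and $\lambda_{jik}$ denote the same variable (but $\lambda_{ijk}$ and $\lambda_{kji}$ are different). $\mathcal{D}\mathrm{OPT}^+(\mathbf{x})$: maximize $\sum_{\mathbf{t}\text{ tour}}\mu_{\mathbf{t}}$ subject to $\sum_{k\ne i,j}(-\lambda_{ijk}+\lambda_{ikj}+\lambda_{jki})+\sum_{\mathbf{t}}t_{ij}\mu_{\mathbf{t}}\le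 x_{ij}$ for all $ij\in E_n$, $\lambda_{ijk}\ge0$ for all $ij\in E_n$, $k\in V_n\setminus\{i,j\}$, and $\mu_{\mathbf{t}}\ge0$ for all tours $\mathbf{t}$. $\mathcal{D}\mathrm{OPT}^{\mathrm{II}}(\mathbf{x})$: maximize $\sum_{\mathbf{w}\text{ walk on }G_{\mathbf{x}}}\mu_{\mathbf{w}}$ subject to $\sum_{\mathbf{w}\text{ walk on }G_{\mathbf{x}}}w_{ij}\mu_{\mathbf{w}}\le x_{ij}$ for all $ij\in E_{\mathbf{x}}$, and $\mu_{\mathbf{w}}\ge0$. *)

theory Defs
  imports Main "HOL-Library.Extended_Real"
begin

definition edges :: "nat \<Rightarrow> nat set set" where
  "edges n = {{i, j} | i j. i < n \<and> j < n \<and> i \<noteq> j}"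

definition cut :: "nat \<Rightarrow> nat set \<Rightarrow> nat set set" where
  "cut n S = {e \<in> edges n. card (e \<inter> S) = 1}"

text \<open>Points of R^{E_n} are functions on edges vanishing outside E_n.\<close>
definition P_SEP :: "nat \<Rightarrow> (nat set \<Rightarrow> real) set" where
  "P_SEP n = {x. (\<forall>e. e \<notin> edges n \<longrightarrow> x e = 0)
      \<and> (\<forall>v<n. (\<Sum>e\<in>cut n {v}. x e) = 2)
      \<and> (\<forall>S. S \<subseteq> {..<n} \<and> 3 \<le> card S \<and> card S \<le> n - 3 \<longrightarrow> (\<Sum>e\<in>cut n S. x e) \<ge> 2)
      \<and> (\<forall>e\<in>edges n. 0 \<le> x e \<and> x e \<le> 1)}"

definition is_vertex :: "(nat set \<Rightarrow> real) set \<Rightarrow> (nat set \<Rightarrow> real) \<Rightarrow> bool" where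
  "is_vertex P x \<longleftrightarrow> x \<in> P \<and>
     \<not> (\<exists>a\<in>P. \<exists>b\<in>P. \<exists>u::real. a \<noteq> b \<and> 0 < u \<and> u < 1 \<and>
            x = (\<lambda>e. (1 - u) * a e + u * b e))"

definition support :: "(nat set \<Rightarrow> real) \<Rightarrow> nat \<Rightarrow> nat set set" where
  "support x n = {e \<in> edges n. x e > 0}"

text \<open>Tours (Hamiltonian cycles of K_n), identified with their edge sets
  (i.e. with their 0/1 characteristic vectors).\<close>
definition tours :: "nat \<Rightarrow> nat set set set" where
  "tours n = {{{vs ! i, vs ! ((i + 1) mod n)} | i. i < n} | vs.
      3 \<le> n \<and> distinct vs \<and> set vs = {..<n}}"

text \<open>Characteristic vectors of closed walks on the graph (V_n, E) visiting every
  node, with every edge traversed at most twice.\<close>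
definition walks :: "nat \<Rightarrow> nat set set \<Rightarrow> (nat set \<Rightarrow> nat) set" where
  "walks n E = {w. \<exists>vs. let k = length vs in
      k > 0 \<and> set vs = {..<n}
      \<and> (\<forall>i<k. {vs ! i, vs ! ((i + 1) mod k)} \<in> E)
      \<and> w = (\<lambda>e. card {i. i < k \<and> {vs ! i, vs ! ((i + 1) mod k)} = e})
      \<and> (\<forall>e. w e \<le> 2)}"

definition DOPT_plus :: "nat \<Rightarrow> (nat set \<Rightarrow> real) \<Rightarrow> ereal" where
  "DOPT_plus n x = Sup {ereal (\<Sum>t\<in>tours n. \<mu> t) | (lam::nat set \<Rightarrow> nat \<Rightarrow> real) \<mu>.
      (\<forall>e\<in>edges n. \<forall>k<n. k \<notin> e \<longrightarrow> 0 \<le> lam e k)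
      \<and> (\<forall>t\<in>tours n. 0 \<le> \<mu> t)
      \<and> (\<forall>i<n. \<forall>j<n. i \<noteq> j \<longrightarrow>
           (\<Sum>k\<in>{..<n} - {i, j}. - lam {i, j} k + lam {i, k} j + lam {j, k} i)
           + (\<Sum>t\<in>{t \<in> tours n. {i, j} \<in> t}. \<mu> t) \<le> x {i, j})}"

definition DOPT_II :: "nat \<Rightarrow> (nat set \<Rightarrow> real) \<Rightarrow> ereal" where
  "DOPT_II n x = Sup {ereal (\<Sum>w\<in>walks n (support x n). \<mu> w) | \<mu>.
      (\<forall>w\<in>walks n (support x n). 0 \<le> \<mu> w)
      \<and> (\<forall>e\<in>support x n. (\<Sum>w\<in>walks n (support x n). real (w e) * \<mu> w) \<le> x e)}"

end

theory Submission
  imports Defs "HOL-Library.Sublist"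
begin

text \<open>
  Every feasible solution of either program is turned into one of the other with the same objective
  value, so the two suprema coincide; only \<open>x \<ge> 0\<close> is needed.

  From walks to tours: skipping the repeated nodes of a closed walk yields a tour, and replacing a
  subpath \<open>i, k, j\<close> by the edge \<open>ij\<close> is exactly what one unit of \<open>\<lambda>\<^sub>i\<^sub>j\<^sub>k\<close> pays for.

  From tours to walks: regard the tours as closed walks and remove \<open>\<lambda>\<close> step by step. A positive
  \<open>\<lambda>\<^sub>i\<^sub>j\<^sub>k\<close> whose edge \<open>ij\<close> is not a detour edge of another positive \<open>\<lambda>\<close> is undone by sending
  the walks through \<open>k\<close> instead of along \<open>ij\<close>; if every positive \<open>\<lambda>\<close> has its edge produced by
  another one, the positive \<open>\<lambda>\<close>'s contain a cycle, which can be lowered uniformly without raising the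
  \<open>\<lambda>\<close>-term. Once \<open>\<lambda> = 0\<close> the walks fit under \<open>x\<close> and so use only support edges. Finally a walk
  that traverses an edge three times traverses it twice in the same direction,
  \<open>\<dots> a b P a b \<dots>\<close>, and reversing \<open>P\<close> removes both traversals while keeping all nodes.
\<close>

lemma distinct_adj_if_distinct: "distinct xs \<Longrightarrow> distinct_adj xs"
  by (induction xs rule: induct_list012) auto

lemma distinct_adj_append_Cons:
  "distinct_adj (xs @ y # ys) \<longleftrightarrow> distinct_adj (xs @ [y]) \<and> distinct_adj (y # ys)"
  by (cases "xs = []") (auto simp: distinct_adj_append_iff distinct_adj_Cons)

lemma distinct_adj_closed_if_distinct:
  assumes "2 \<le> length q" "distinct q"
  shows "distinct_adj (q @ [hd q])"
proof -
  obtain a r where q: "q = a # r" "r \<noteq> []"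
    using assms(1) by (cases q) force+
  then have "last q \<noteq> hd q"
    using assms(2) last_in_set[of r] by auto
  then show ?thesis
    using distinct_adj_append_iff[of q "[hd q]"] distinct_adj_if_distinct[OF assms(2)] by simp
qed

lemma count_list_distinct: "distinct xs \<Longrightarrow> count_list xs x = of_bool (x \<in> set xs)"
  by (induction xs) auto

lemma subseq_remdups: "subseq (remdups xs) xs"
  by (induction xs) auto

lemma sum_list_pushforward:
  fixes F :: "'a \<Rightarrow> 'b::comm_semiring_0"
  assumes "finite A" "\<forall>x\<in>set xs. T x \<in> A"
  shows "(\<Sum>a\<in>A. F a * (\<Sum>x\<leftarrow>xs. if T x = a then c x else 0)) = (\<Sum>x\<leftarrow>xs. c x * F (T x))"
  using assms(2)
proof (induction xs)
  case (Cons y xs)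
  have "(\<Sum>a\<in>A. F a * (if T y = a then c y else 0)) = c y * F (T y)"
    using Cons.prems assms(1) by (simp add: if_distrib mult.commute cong: if_cong)
  with Cons show ?case by (simp add: distrib_left sum.distrib)
qed simp

definition path_edges :: "'a list \<Rightarrow> 'a set list" where
  "path_edges p = map (\<lambda>(u, v). {u, v}) (zip p (tl p))"

definition traversals :: "'a list \<Rightarrow> 'a set \<Rightarrow> nat" where
  "traversals p = count_list (path_edges p)"

lemma path_edges_simps [simp]:
  "path_edges [] = []"
  "path_edges [u] = []"
  "path_edges (u # v # p) = {u, v} # path_edges (v # p)"
  by (simp_all add: path_edges_def)

lemma traversals_simps [simp]:
  "traversals [] = (\<lambda>g. 0)"
  "traversals [u] = (\<lambda>g. 0)"
  "traversals (u # v # p) g = of_bool (g = {u, v}) + traversals (v # p) g"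
  by (auto simp: traversals_def)

lemma path_edges_append [simp]:
  "path_edges (xs @ u # v # p) = path_edges (xs @ [u]) @ {u, v} # path_edges (v # p)"
  by (induction xs rule: induct_list012) auto

lemma traversals_append [simp]:
  "traversals (xs @ u # v # p) g = traversals (xs @ [u]) g + of_bool (g = {u, v}) + traversals (v # p) g"
  by (auto simp: traversals_def)

lemma traversals_append_Cons:
  "traversals (xs @ u # p) g = traversals (xs @ [u]) g + traversals (u # p) g"
  by (cases p) simp_all

lemma path_edges_rev [simp]: "path_edges (rev p) = rev (path_edges p)"
  by (induction p rule: induct_list012) (auto simp: insert_commute)

lemma traversals_rev [simp]: "traversals (rev p) = traversals p"
  by (simp add: traversals_def fun_eq_iff)

lemma path_edge_subset: "e \<in> set (path_edges p) \<Longrightarrow> e \<subseteq> set p"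
  by (induction p rule: induct_list012) auto

lemma path_edge_doubleton:
  "distinct_adj p \<Longrightarrow> e \<in> set (path_edges p) \<Longrightarrow> \<exists>u v. u \<noteq> v \<and> e = {u, v}"
  by (induction p rule: induct_list012) auto

lemma doubleton_in_edges_iff: "{a, b} \<in> edges n \<longleftrightarrow> a < n \<and> b < n \<and> a \<noteq> b"
  unfolding edges_def by (auto simp: doubleton_eq_iff)

lemma edgesE:
  assumes "e \<in> edges n"
  obtains a b where "e = {a, b}" "a < n" "b < n" "a \<noteq> b"
  using assms unfolding edges_def by auto

lemma finite_edges: "finite (edges n)"
  by (rule finite_subset[of _ "Pow {..<n}"]) (auto simp: edges_def)

lemma distinct_adj_if_path_edges_in_edges:
  "set (path_edges p) \<subseteq> edges n \<Longrightarrow> distinct_adj p"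
  by (induction p rule: induct_list012) (auto simp: edges_def doubleton_eq_iff)

lemma path_edges_subset_edges:
  "distinct_adj p \<Longrightarrow> set p \<subseteq> {..<n} \<Longrightarrow> set (path_edges p) \<subseteq> edges n"
  by (induction p rule: induct_list012) (auto simp: doubleton_in_edges_iff)

lemma cycle_path_edges_conv_nth:
  assumes "vs \<noteq> []"
  shows "path_edges (vs @ [hd vs]) = map (\<lambda>i. {vs ! i, vs ! ((i + 1) mod length vs)}) [0..<length vs]"
proof (rule nth_equalityI)
  fix i assume "i < length (path_edges (vs @ [hd vs]))"
  then have i: "i < length vs" by (simp add: path_edges_def)
  have "(vs @ [hd vs]) ! Suc i = vs ! ((i + 1) mod length vs)"
    using i assms by (cases "Suc i = length vs") (auto simp: nth_append hd_conv_nth)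
  then show "path_edges (vs @ [hd vs]) ! i = map (\<lambda>i. {vs ! i, vs ! ((i + 1) mod length vs)}) [0..<length vs] ! i"
    using i by (simp add: path_edges_def nth_append nth_tl)
qed (simp add: path_edges_def)

lemma traversals_cycle_conv_card:
  assumes "vs \<noteq> []"
  shows "traversals (vs @ [hd vs]) e = card {i. i < length vs \<and> {vs ! i, vs ! ((i + 1) mod length vs)} = e}"
proof -
  have "traversals (vs @ [hd vs]) e = card {i. i < length vs \<and> e = {vs ! i, vs ! ((i + 1) mod length vs)}}"
    by (simp add: traversals_def cycle_path_edges_conv_nth[OF assms] count_list_eq_length_filter
        length_filter_conv_card filter_map o_def cong: conj_cong)
  also have "\<dots> = card {i. i < length vs \<and> {vs ! i, vs ! ((i + 1) mod length vs)} = e}"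
    by (rule arg_cong[where f = card]) auto
  finally show ?thesis .
qed

text \<open>
  A closed walk is stored with its first node repeated at the end; \<open>walks\<close> stores the
  cyclic list \<open>vs\<close> instead, which corresponds to \<open>vs @ [hd vs]\<close>.
\<close>

definition closed_walk :: "'a set \<Rightarrow> 'a list \<Rightarrow> bool" where
  "closed_walk V p \<longleftrightarrow> p \<noteq> [] \<and> hd p = last p \<and> distinct_adj p \<and> set p = V"

lemma closed_walk_butlast:
  assumes "closed_walk V p" "2 \<le> card V"
  shows "butlast p \<noteq> []" "p = butlast p @ [hd (butlast p)]" "set (butlast p) = V"
proof -
  have walk: "p \<noteq> []" "hd p = last p" "set p = V"
    using assms(1) unfolding closed_walk_def by auto
  have "2 \<le> length p"
    using card_length[of p] walk(3) assms(2) by simp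
  then show ne: "butlast p \<noteq> []" by (auto simp flip: length_greater_0_conv)
  have "p = butlast p @ [last p]" using walk(1) by simp
  moreover have "hd p = hd (butlast p)"
    using ne by (subst calculation) simp
  ultimately show p: "p = butlast p @ [hd (butlast p)]"
    using walk(2) by simp
  show "set (butlast p) = V"
    using walk(3) ne by (subst (asm) p) (auto simp: insert_absorb)
qed

lemma closed_walk_Hamiltonian:
  assumes "distinct q" "set q = V" "2 \<le> card V"
  shows "closed_walk V (q @ [hd q])"
proof -
  have "2 \<le> length q" using distinct_card[OF assms(1)] assms(2,3) by simp
  then show ?thesis
    using distinct_adj_closed_if_distinct[OF _ assms(1)] assms(2) by (cases q) (auto simp: closed_walk_def)
qed

lemma walks_iff:
  "w \<in> walks n E \<longleftrightarrow> (\<exists>vs. vs \<noteq> [] \<and> set vs = {..<n} \<and> set (path_edges (vs @ [hd vs])) \<subseteq> E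
      \<and> w = traversals (vs @ [hd vs]) \<and> (\<forall>e. w e \<le> 2))"
proof -
  have "(\<forall>i<length vs. {vs ! i, vs ! ((i + 1) mod length vs)} \<in> E) \<longleftrightarrow> set (path_edges (vs @ [hd vs])) \<subseteq> E"
    "(\<lambda>e. card {i. i < length vs \<and> {vs ! i, vs ! ((i + 1) mod length vs)} = e}) = traversals (vs @ [hd vs])"
    if "vs \<noteq> []" for vs :: "nat list"
    using that by (auto simp: cycle_path_edges_conv_nth traversals_cycle_conv_card)
  then show ?thesis
    unfolding walks_def Let_def mem_Collect_eq length_greater_0_conv by (intro ex_cong) simp
qed

lemma walk_vanishes_outside: "w \<in> walks n E \<Longrightarrow> e \<notin> E \<Longrightarrow> w e = 0"
  by (auto simp: walks_iff traversals_def count_list_0_iff)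

lemma finite_walks:
  assumes "finite E"
  shows "finite (walks n E)"
proof (rule finite_subset)
  show "walks n E \<subseteq> {w. \<forall>e. (e \<in> E \<longrightarrow> w e \<in> {..2}) \<and> (e \<notin> E \<longrightarrow> w e = 0)}"
    by (auto simp: walks_iff walk_vanishes_outside)
  show "finite {w. \<forall>e. (e \<in> E \<longrightarrow> w e \<in> {..2::nat}) \<and> (e \<notin> E \<longrightarrow> w e = 0)}"
    using finite_set_of_finite_funs[OF assms, of "{..2::nat}" 0] by simp
qed

lemma closed_walk_of_walk:
  assumes "w \<in> walks n E" "E \<subseteq> edges n"
  obtains p where "closed_walk {..<n} p" "set (path_edges p) \<subseteq> E" "w = traversals p"
proof -
  obtain vs where "vs \<noteq> []" "set vs = {..<n}" "set (path_edges (vs @ [hd vs])) \<subseteq> E"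
    "w = traversals (vs @ [hd vs])"
    using assms(1) unfolding walks_iff by blast
  moreover have "distinct_adj (vs @ [hd vs])"
    using calculation(3) assms(2) by (intro distinct_adj_if_path_edges_in_edges) auto
  ultimately show thesis
    by (intro that[of "vs @ [hd vs]"]) (auto simp: closed_walk_def)
qed

lemma walk_of_closed_walk:
  assumes "closed_walk {..<n} p" "2 \<le> n" "set (path_edges p) \<subseteq> E" "\<forall>g. traversals p g \<le> 2"
  shows "traversals p \<in> walks n E"
  unfolding walks_iff
  using closed_walk_butlast[OF assms(1)] assms(2-4) by (intro exI[of _ "butlast p"]) auto

lemma tours_iff:
  "t \<in> tours n \<longleftrightarrow> 3 \<le> n \<and> (\<exists>q. distinct q \<and> set q = {..<n} \<and> t = set (path_edges (q @ [hd q])))"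
proof -
  have "set (path_edges (q @ [hd q])) = {{q ! i, q ! ((i + 1) mod n)} | i. i < n}"
    if "distinct q" "set q = {..<n}" "3 \<le> n" for q
  proof -
    have "length q = n" using distinct_card[OF that(1)] that(2) by simp
    with that(3) have "q \<noteq> []" by auto
    with \<open>length q = n\<close> show ?thesis by (auto simp: cycle_path_edges_conv_nth)
  qed
  then show ?thesis unfolding tours_def by blast
qed

lemma finite_tours: "finite (tours n)"
proof (rule finite_subset[of _ "Pow (Pow {..<n})"])
  show "tours n \<subseteq> Pow (Pow {..<n})"
  proof
    fix t assume "t \<in> tours n"
    then obtain q where q: "3 \<le> n" "set q = {..<n}" "t = set (path_edges (q @ [hd q]))"
      unfolding tours_iff by blast
    have "q \<noteq> []" using q(1,2) by (metis empty_set lessThan_empty_iff not_numeral_le_zero)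
    then have "set (q @ [hd q]) = set q" using hd_in_set by (simp add: insert_absorb)
    with q(2,3) show "t \<in> Pow (Pow {..<n})" using path_edge_subset[of _ "q @ [hd q]"] by blast
  qed
qed simp

lemma distinct_Hamiltonian_path_edges:
  assumes "distinct q" "3 \<le> length q"
  shows "distinct (path_edges (q @ [hd q]))"
proof -
  let ?n = "length q"
  have "q \<noteq> []" using assms(2) by auto
  have "i = j" if ij: "i < ?n" "j < ?n" and eq: "{q ! i, q ! ((i + 1) mod ?n)} = {q ! j, q ! ((j + 1) mod ?n)}" for i j
  proof (rule ccontr)
    assume "i \<noteq> j"
    have idx: "q ! a = q ! b \<longleftrightarrow> a = b" if "a < ?n" "b < ?n" for a b
      using nth_eq_iff_index_eq[OF assms(1) that] .
    have "(i + 1) mod ?n < ?n" "(j + 1) mod ?n < ?n" using \<open>q \<noteq> []\<close> by simp_all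
    moreover have "q ! i = q ! ((j + 1) mod ?n) \<and> q ! ((i + 1) mod ?n) = q ! j"
      using eq \<open>i \<noteq> j\<close> idx[OF ij] by (auto simp: doubleton_eq_iff)
    ultimately have "i = (j + 1) mod ?n" "j = (i + 1) mod ?n"
      using idx[of i "(j + 1) mod ?n"] idx[of "(i + 1) mod ?n" j] ij by simp_all
    then have "i = (i + 2) mod ?n" by (simp add: mod_Suc_eq)
    moreover have "(i + 2) mod ?n \<noteq> i"
      using ij(1) assms(2) by (cases "i + 2 < ?n") (simp_all add: le_mod_geq)
    ultimately show False by simp
  qed
  then show ?thesis
    using \<open>q \<noteq> []\<close> by (auto simp: cycle_path_edges_conv_nth distinct_map inj_on_def)
qed

lemma traversals_Hamiltonian:
  "distinct q \<Longrightarrow> 3 \<le> length q \<Longrightarrow> traversals (q @ [hd q]) g = of_bool (g \<in> set (path_edges (q @ [hd q])))"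
  by (simp add: traversals_def count_list_distinct distinct_Hamiltonian_path_edges)

definition shortcut_indices :: "nat \<Rightarrow> (nat set \<times> nat) set" where
  "shortcut_indices n = {(e, k). e \<in> edges n \<and> k < n \<and> k \<notin> e}"

definition shortcut_nonneg :: "nat \<Rightarrow> (nat set \<Rightarrow> nat \<Rightarrow> real) \<Rightarrow> bool" where
  "shortcut_nonneg n l \<longleftrightarrow> (\<forall>e\<in>edges n. \<forall>k<n. k \<notin> e \<longrightarrow> 0 \<le> l e k)"

definition detour_edges :: "nat set \<Rightarrow> nat \<Rightarrow> nat set set" where
  "detour_edges e k = (\<lambda>v. {v, k}) ` e"

definition detour :: "nat set \<Rightarrow> nat \<Rightarrow> nat set \<Rightarrow> real" where
  "detour e k g = of_bool (g \<in> detour_edges e k) - of_bool (g = e)"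

text \<open>
  \<open>l e k\<close> is the paper's \<open>\<lambda>\<^sub>i\<^sub>j\<^sub>k\<close> for \<open>e = {i, j}\<close>: one unit of it takes one unit of load off
  \<open>e\<close> and puts one unit on each detour edge \<open>{i, k}\<close>, \<open>{j, k}\<close>. By
  \<open>shortcut_load_doubleton\<close> below, \<open>shortcut_load\<close> is the \<open>\<lambda>\<close>-term of \<open>DOPT\<^sup>+\<close>.
\<close>

definition shortcut_load :: "nat \<Rightarrow> (nat set \<Rightarrow> nat \<Rightarrow> real) \<Rightarrow> nat set \<Rightarrow> real" where
  "shortcut_load n l g = (\<Sum>(e, k)\<in>shortcut_indices n. l e k * detour e k g)"

definition active_shortcuts :: "nat \<Rightarrow> (nat set \<Rightarrow> nat \<Rightarrow> real) \<Rightarrow> (nat set \<times> nat) set" where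
  "active_shortcuts n l = {(e, k) \<in> shortcut_indices n. 0 < l e k}"

lemma finite_shortcut_indices: "finite (shortcut_indices n)"
  by (rule finite_subset[of _ "edges n \<times> {..<n}"]) (auto simp: shortcut_indices_def finite_edges)

lemma finite_active_shortcuts: "finite (active_shortcuts n l)"
  by (rule finite_subset[OF _ finite_shortcut_indices]) (auto simp: active_shortcuts_def)

lemma shortcut_nonneg_iff: "shortcut_nonneg n l \<longleftrightarrow> (\<forall>(e, k)\<in>shortcut_indices n. 0 \<le> l e k)"
  by (auto simp: shortcut_nonneg_def shortcut_indices_def)

lemma detour_doubleton:
  assumes "a \<noteq> b" "k \<noteq> a" "k \<noteq> b"
  shows "detour {a, b} k g = of_bool (g = {a, k}) + of_bool (g = {b, k}) - of_bool (g = {a, b})"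
  using assms by (auto simp: detour_def detour_edges_def doubleton_eq_iff)

lemma shortcut_load_doubleton:
  assumes "i < n" "j < n" "i \<noteq> j"
  shows "shortcut_load n l {i, j} = (\<Sum>k\<in>{..<n} - {i, j}. - l {i, j} k + l {i, k} j + l {j, k} i)"
proof -
  let ?I = "shortcut_indices n" and ?K = "{..<n} - {i, j}" and ?l = "\<lambda>s. l (fst s) (snd s)"
  have "shortcut_load n l {i, j} =
      (\<Sum>s\<in>{s\<in>?I. {i, j} \<in> detour_edges (fst s) (snd s)}. ?l s) - (\<Sum>s\<in>{s\<in>?I. fst s = {i, j}}. ?l s)"
    unfolding shortcut_load_def detour_def
    by (auto simp: sum.inter_filter finite_shortcut_indices case_prod_beta right_diff_distrib
        sum_subtractf of_bool_def eq_commute intro!: arg_cong2[where f = "(-)"] sum.cong)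
  moreover have "{s\<in>?I. fst s = {i, j}} = (\<lambda>k. ({i, j}, k)) ` ?K"
    using assms by (auto simp: shortcut_indices_def doubleton_in_edges_iff)
  moreover have "{s\<in>?I. {i, j} \<in> detour_edges (fst s) (snd s)} = (\<lambda>k. ({i, k}, j)) ` ?K \<union> (\<lambda>k. ({j, k}, i)) ` ?K"
    using assms by (fastforce simp: shortcut_indices_def detour_edges_def doubleton_eq_iff
        doubleton_in_edges_iff elim!: edgesE)
  moreover have "inj_on (\<lambda>k. ({i, k}, j)) ?K" "inj_on (\<lambda>k. ({j, k}, i)) ?K" "inj_on (\<lambda>k. ({i, j}, k)) ?K"
    by (auto intro!: inj_onI simp: doubleton_eq_iff)
  moreover have "(\<lambda>k. ({i, k}, j)) ` ?K \<inter> (\<lambda>k. ({j, k}, i)) ` ?K = {}"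
    using assms by auto
  ultimately show ?thesis
    by (simp add: sum.union_disjoint sum.reindex sum.distrib sum_subtractf algebra_simps)
qed

lemma shortcut_load_add:
  "shortcut_load n (\<lambda>e k. l1 e k + l2 e k) g = shortcut_load n l1 g + shortcut_load n l2 g"
  by (simp add: shortcut_load_def case_prod_beta distrib_right sum.distrib)

lemma shortcut_load_sum:
  "finite W \<Longrightarrow> shortcut_load n (\<lambda>e k. \<Sum>w\<in>W. c w * l w e k) g = (\<Sum>w\<in>W. c w * shortcut_load n (l w) g)"
  by (simp add: shortcut_load_def case_prod_beta sum_distrib_left sum_distrib_right
      sum.swap[of _ W] mult.assoc)

lemma shortcut_load_unit:
  assumes "(e, k) \<in> shortcut_indices n"
  shows "shortcut_load n (\<lambda>e' k'. of_bool (e' = e \<and> k' = k)) g = detour e k g"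
proof -
  have "shortcut_load n (\<lambda>e' k'. of_bool (e' = e \<and> k' = k)) g =
      (\<Sum>s\<in>shortcut_indices n. if s = (e, k) then detour e k g else 0)"
    unfolding shortcut_load_def by (rule sum.cong) auto
  then show ?thesis using assms finite_shortcut_indices by simp
qed

lemma shortcut_load_subtract:
  assumes "C \<subseteq> shortcut_indices n"
  shows "shortcut_load n (\<lambda>e k. l e k - c * of_bool ((e, k) \<in> C)) g
       = shortcut_load n l g - c * (\<Sum>(e, k)\<in>C. detour e k g)"
proof -
  have "(\<Sum>s\<in>shortcut_indices n. c * of_bool (s \<in> C) * detour (fst s) (snd s) g)
      = (\<Sum>s\<in>shortcut_indices n \<inter> C. c * detour (fst s) (snd s) g)"
    by (simp add: sum.inter_restrict finite_shortcut_indices of_bool_def if_distrib if_distribR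
        cong: if_cong)
  also have "\<dots> = c * (\<Sum>(e, k)\<in>C. detour e k g)"
    using assms by (simp add: Int_absorb1 sum_distrib_left case_prod_beta)
  finally show ?thesis
    by (simp add: shortcut_load_def case_prod_beta left_diff_distrib sum_subtractf)
qed

lemma shortcut_load_nonpos_if_unproduced:
  assumes "shortcut_nonneg n l" "\<forall>(e, k)\<in>active_shortcuts n l. g \<notin> detour_edges e k"
  shows "shortcut_load n l g \<le> 0"
  unfolding shortcut_load_def
proof (rule sum_nonpos)
  fix s assume s: "s \<in> shortcut_indices n"
  obtain e k where [simp]: "s = (e, k)" by fastforce
  have "0 \<le> l e k" using assms(1) s by (auto simp: shortcut_nonneg_iff)
  moreover have "\<not> 0 < l e k" if "g \<in> detour_edges e k"
    using assms(2) s that by (auto simp: active_shortcuts_def)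
  ultimately show "(case s of (e, k) \<Rightarrow> l e k * detour e k g) \<le> 0"
    by (cases "g \<in> detour_edges e k") (auto simp: detour_def)
qed

lemma shortcut_load_eq_0_if_inactive:
  assumes "shortcut_nonneg n l" "active_shortcuts n l = {}"
  shows "shortcut_load n l g = 0"
proof -
  have "l e k = 0" if "(e, k) \<in> shortcut_indices n" for e k
    using assms that by (fastforce simp: shortcut_nonneg_iff active_shortcuts_def)
  then show ?thesis unfolding shortcut_load_def by (intro sum.neutral) auto
qed

section \<open>Dominance up to shortcuts\<close>

text \<open>
  \<open>shortcut_le n F G\<close>: after replacing some of its edges by detours, \<open>F\<close> is at most \<open>G\<close>.
\<close>

definition shortcut_le :: "nat \<Rightarrow> (nat set \<Rightarrow> real) \<Rightarrow> (nat set \<Rightarrow> real) \<Rightarrow> bool" where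
  "shortcut_le n F G \<longleftrightarrow> (\<exists>l. shortcut_nonneg n l \<and> (\<forall>g\<in>edges n. F g + shortcut_load n l g \<le> G g))"

lemma shortcut_le_of_le: "(\<And>g. g \<in> edges n \<Longrightarrow> F g \<le> G g) \<Longrightarrow> shortcut_le n F G"
  unfolding shortcut_le_def
  by (rule exI[of _ "\<lambda>e k. 0"]) (simp add: shortcut_nonneg_def shortcut_load_def)

lemma shortcut_le_trans [trans]:
  assumes "shortcut_le n F G" "shortcut_le n G H"
  shows "shortcut_le n F H"
proof -
  obtain l1 l2 where "shortcut_nonneg n l1" "\<forall>g\<in>edges n. F g + shortcut_load n l1 g \<le> G g"
    "shortcut_nonneg n l2" "\<forall>g\<in>edges n. G g + shortcut_load n l2 g \<le> H g"
    using assms unfolding shortcut_le_def by blast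
  then show ?thesis
    unfolding shortcut_le_def shortcut_nonneg_def
    by (intro exI[of _ "\<lambda>e k. l1 e k + l2 e k"]) (force simp: shortcut_load_add)
qed

lemma shortcut_le_add:
  assumes "shortcut_le n F1 G1" "shortcut_le n F2 G2"
  shows "shortcut_le n (\<lambda>g. F1 g + F2 g) (\<lambda>g. G1 g + G2 g)"
proof -
  obtain l1 l2 where "shortcut_nonneg n l1" "\<forall>g\<in>edges n. F1 g + shortcut_load n l1 g \<le> G1 g"
    "shortcut_nonneg n l2" "\<forall>g\<in>edges n. F2 g + shortcut_load n l2 g \<le> G2 g"
    using assms unfolding shortcut_le_def by blast
  then show ?thesis
    unfolding shortcut_le_def shortcut_nonneg_def
    by (intro exI[of _ "\<lambda>e k. l1 e k + l2 e k"]) (force simp: shortcut_load_add)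
qed

lemma shortcut_le_sum:
  assumes "finite W" "\<And>w. w \<in> W \<Longrightarrow> 0 \<le> c w" "\<And>w. w \<in> W \<Longrightarrow> shortcut_le n (F w) (G w)"
  shows "shortcut_le n (\<lambda>g. \<Sum>w\<in>W. c w * F w g) (\<lambda>g. \<Sum>w\<in>W. c w * G w g)"
proof -
  obtain l where l: "\<And>w. w \<in> W \<Longrightarrow> shortcut_nonneg n (l w)"
    "\<And>w g. w \<in> W \<Longrightarrow> g \<in> edges n \<Longrightarrow> F w g + shortcut_load n (l w) g \<le> G w g"
    using assms(3) unfolding shortcut_le_def by metis
  have "shortcut_nonneg n (\<lambda>e k. \<Sum>w\<in>W. c w * l w e k)"
    using l(1) assms(2) by (auto simp: shortcut_nonneg_def intro!: sum_nonneg)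
  moreover have "(\<Sum>w\<in>W. c w * F w g) + shortcut_load n (\<lambda>e k. \<Sum>w\<in>W. c w * l w e k) g
      \<le> (\<Sum>w\<in>W. c w * G w g)" if "g \<in> edges n" for g
    using l(2)[OF _ that] assms(2)
    by (simp add: shortcut_load_sum[OF assms(1)] sum.distrib[symmetric] distrib_left[symmetric]
        sum_mono mult_left_mono)
  ultimately show ?thesis unfolding shortcut_le_def by blast
qed

lemma shortcut_le_triangle:
  assumes "a < n" "b < n" "k < n" "a \<noteq> b" "k \<noteq> a" "k \<noteq> b"
  shows "shortcut_le n (\<lambda>g. of_bool (g = {a, b})) (\<lambda>g. of_bool (g = {a, k}) + of_bool (g = {k, b}))"
  unfolding shortcut_le_def
proof (intro exI conjI ballI)
  have "({a, b}, k) \<in> shortcut_indices n"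
    using assms by (simp add: shortcut_indices_def doubleton_in_edges_iff)
  then show "of_bool (g = {a, b}) + shortcut_load n (\<lambda>e' k'. of_bool (e' = {a, b} \<and> k' = k)) g
      \<le> of_bool (g = {a, k}) + of_bool (g = {k, b})" for g
    using assms by (simp add: shortcut_load_unit detour_doubleton insert_commute)
qed (simp add: shortcut_nonneg_def)

lemma shortcut_le_path:
  assumes "distinct_adj p" "set p \<subseteq> {..<n}" "p \<noteq> []" "hd p \<noteq> last p"
  shows "shortcut_le n (\<lambda>g. of_bool (g = {hd p, last p})) (\<lambda>g. real (traversals p g))"
  using assms
proof (induction p rule: induct_list012)
  case (3 x y r)
  let ?z = "last (y # r)"
  have "x \<noteq> y" "x \<noteq> ?z" "x < n" "y < n" "?z < n"
    using "3.prems" last_in_set[of "y # r"] by auto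
  show ?case
  proof (cases "y = ?z")
    case True
    then show ?thesis by (intro shortcut_le_of_le) simp
  next
    case False
    have "shortcut_le n (\<lambda>g. of_bool (g = {x, ?z})) (\<lambda>g. of_bool (g = {x, y}) + of_bool (g = {y, ?z}))"
      using shortcut_le_triangle[of x n ?z y] \<open>x \<noteq> ?z\<close> \<open>x \<noteq> y\<close> False \<open>x < n\<close> \<open>y < n\<close> \<open>?z < n\<close>
      by simp
    also have "shortcut_le n \<dots> (\<lambda>g. of_bool (g = {x, y}) + real (traversals (y # r) g))"
      using "3.IH"(2) "3.prems" False by (intro shortcut_le_add[OF shortcut_le_of_le]) auto
    finally show ?thesis by simp
  qed
qed auto

lemma shortcut_le_subseq:
  assumes "subseq q p" "q \<noteq> []" "hd q = hd p" "last q = last p"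
    and "distinct_adj q" "distinct_adj p" "set p \<subseteq> {..<n}"
  shows "shortcut_le n (\<lambda>g. real (traversals q g)) (\<lambda>g. real (traversals p g))"
  using assms
proof (induction q arbitrary: p rule: induct_list012)
  case (2 a)
  then show ?case by (intro shortcut_le_of_le) simp
next
  case (3 a b q)
  obtain p' where p: "p = a # p'"
    using "3.prems"(1,3) by (cases p) auto
  obtain us vs where p': "p' = us @ b # vs" and "subseq q vs"
    using "3.prems"(1) list_emb_ConsD[of "(=)" b q p'] unfolding p by auto
  have "distinct_adj (b # vs)"
    using "3.prems"(6) distinct_adj_appendD2[of "a # us" "b # vs"] unfolding p p' by simp
  then have "shortcut_le n (\<lambda>g. real (traversals (b # q) g)) (\<lambda>g. real (traversals (b # vs) g))"
    using "3.prems" \<open>subseq q vs\<close> unfolding p p' by (intro "3.IH"(2)) auto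
  moreover have "distinct_adj (a # us @ [b])"
    using "3.prems"(6) distinct_adj_appendD1[of "a # us @ [b]" vs] unfolding p p' by simp
  then have "shortcut_le n (\<lambda>g. of_bool (g = {a, b})) (\<lambda>g. real (traversals (a # us @ [b]) g))"
    using shortcut_le_path[of "a # us @ [b]" n] "3.prems"(5,7) unfolding p p' by auto
  moreover have "traversals (a # us @ b # vs) g = traversals (a # us @ [b]) g + traversals (b # vs) g" for g
    using traversals_append_Cons[of "a # us" b vs g] by simp
  ultimately show ?case
    using shortcut_le_add unfolding p p' by fastforce
qed simp

lemma closed_walk_shortcut_Hamiltonian:
  assumes "closed_walk {..<n} p" "3 \<le> n"
  obtains q where "distinct q" "set q = {..<n}"
    "shortcut_le n (\<lambda>g. real (traversals (q @ [hd q]) g)) (\<lambda>g. real (traversals p g))"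
proof -
  define vs where "vs = butlast p"
  have vs: "vs \<noteq> []" "p = vs @ [hd vs]" "set vs = {..<n}"
    using closed_walk_butlast[OF assms(1)] assms(2) unfolding vs_def by auto
  define q where "q = hd vs # remdups (filter (\<lambda>v. v \<noteq> hd vs) (tl vs))"
  have vs_Cons: "vs = hd vs # tl vs" using vs(1) by simp
  have "set q = set vs"
    unfolding q_def by (subst (2) vs_Cons) auto
  then have q: "distinct q" "set q = {..<n}"
    using vs(3) unfolding q_def by simp_all
  have "subseq q vs"
    unfolding q_def by (subst (2) vs_Cons)
      (simp add: subseq_order.order_trans[OF subseq_remdups subseq_filter_left])
  then have "subseq (q @ [hd q]) p"
    unfolding vs(2) using list_emb_append_mono[of "(=)" q vs "[hd q]" "[hd vs]"] by (simp add: q_def)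
  moreover have "length q \<ge> 2"
    using distinct_card[OF q(1)] q(2) assms(2) by simp
  then have "distinct_adj (q @ [hd q])"
    using q(1) by (rule distinct_adj_closed_if_distinct)
  ultimately have "shortcut_le n (\<lambda>g. real (traversals (q @ [hd q]) g)) (\<lambda>g. real (traversals p g))"
    using assms(1) vs unfolding closed_walk_def by (intro shortcut_le_subseq) (auto simp: q_def)
  with q show thesis using that by blast
qed

lemma walk_shortcut_to_tour:
  assumes "w \<in> walks n E" "E \<subseteq> edges n" "3 \<le> n"
  obtains t where "t \<in> tours n" "shortcut_le n (\<lambda>g. of_bool (g \<in> t)) (\<lambda>g. real (w g))"
proof -
  obtain p where p: "closed_walk {..<n} p" "w = traversals p"
    using closed_walk_of_walk[OF assms(1,2)] by metis
  obtain q where q: "distinct q" "set q = {..<n}"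
    and le: "shortcut_le n (\<lambda>g. real (traversals (q @ [hd q]) g)) (\<lambda>g. real (traversals p g))"
    using closed_walk_shortcut_Hamiltonian[OF p(1) assms(3)] by metis
  have "length q = n" using distinct_card[OF q(1)] q(2) by simp
  then have "traversals (q @ [hd q]) g = of_bool (g \<in> set (path_edges (q @ [hd q])))" for g
    using traversals_Hamiltonian[OF q(1)] assms(3) by simp
  then show thesis
    using that[of "set (path_edges (q @ [hd q]))"] le q assms(3) p(2) by (auto simp: tours_iff)
qed

lemma walk_weights_shortcut_to_tours:
  assumes "finite E" "E \<subseteq> edges n" "3 \<le> n" "\<forall>w\<in>walks n E. 0 \<le> \<mu> w"
  obtains \<mu>' where "\<forall>t\<in>tours n. 0 \<le> \<mu>' t" "(\<Sum>w\<in>walks n E. \<mu> w) = (\<Sum>t\<in>tours n. \<mu>' t)"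
    "shortcut_le n (\<lambda>g. \<Sum>t\<in>{t \<in> tours n. g \<in> t}. \<mu>' t) (\<lambda>g. \<Sum>w\<in>walks n E. \<mu> w * real (w g))"
proof -
  let ?W = "walks n E"
  have "\<forall>w\<in>?W. \<exists>t. t \<in> tours n \<and> shortcut_le n (\<lambda>g. of_bool (g \<in> t)) (\<lambda>g. real (w g))"
    using walk_shortcut_to_tour[OF _ assms(2,3)] by metis
  then obtain T where T: "\<And>w. w \<in> ?W \<Longrightarrow> T w \<in> tours n"
    "\<And>w. w \<in> ?W \<Longrightarrow> shortcut_le n (\<lambda>g. of_bool (g \<in> T w)) (\<lambda>g. real (w g))"
    by metis
  obtain ws where ws: "set ws = ?W" "distinct ws"
    using finite_distinct_list[OF finite_walks[OF assms(1)]] by blast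
  define \<mu>' where "\<mu>' t = (\<Sum>w\<leftarrow>ws. if T w = t then \<mu> w else 0)" for t
  have pushforward: "(\<Sum>t\<in>tours n. F t * \<mu>' t) = (\<Sum>w\<in>?W. \<mu> w * F (T w))" for F
    unfolding \<mu>'_def using sum_list_pushforward[OF finite_tours, where xs = ws and T = T and F = F and c = \<mu>] T(1) ws
    by (simp add: sum_list_distinct_conv_sum_set)
  have "(\<Sum>t\<in>{t \<in> tours n. g \<in> t}. \<mu>' t) = (\<Sum>w\<in>?W. \<mu> w * of_bool (g \<in> T w))" for g
    unfolding pushforward[of "\<lambda>t. of_bool (g \<in> t)", symmetric]
    by (auto simp: sum.inter_filter[OF finite_tours] intro!: sum.cong)
  moreover have "shortcut_le n (\<lambda>g. \<Sum>w\<in>?W. \<mu> w * of_bool (g \<in> T w)) (\<lambda>g. \<Sum>w\<in>?W. \<mu> w * real (w g))"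
    using assms(4) T(2) by (intro shortcut_le_sum[OF finite_walks[OF assms(1)]]) auto
  moreover have "\<forall>t\<in>tours n. 0 \<le> \<mu>' t"
    using assms(4) ws(1) by (auto simp: \<mu>'_def intro!: sum_list_nonneg)
  moreover have "(\<Sum>w\<in>?W. \<mu> w) = (\<Sum>t\<in>tours n. \<mu>' t)"
    using pushforward[of "\<lambda>t. 1"] by simp
  ultimately show thesis using that by simp
qed

section \<open>Rerouting walks along detours\<close>

fun reroute :: "'a \<Rightarrow> 'a \<Rightarrow> 'a \<Rightarrow> 'a list \<Rightarrow> 'a list" where
  "reroute a b k (u # v # p) = u # (if {u, v} = {a, b} then [k] else []) @ reroute a b k (v # p)"
| "reroute a b k p = p"

lemma reroute_ConsE:
  obtains r where "reroute a b k (u # p) = u # r"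
  by (cases p) auto

lemma hd_reroute: "hd (reroute a b k p) = hd p"
  by (induction a b k p rule: reroute.induct) auto

lemma last_reroute: "p \<noteq> [] \<Longrightarrow> last (reroute a b k p) = last p"
proof (induction a b k p rule: reroute.induct)
  case (1 a b k u v p)
  obtain r where "reroute a b k (v # p) = v # r" by (rule reroute_ConsE)
  with 1 show ?case by simp
qed simp_all

lemma set_reroute: "set p \<subseteq> set (reroute a b k p) \<and> set (reroute a b k p) \<subseteq> insert k (set p)"
  by (induction a b k p rule: reroute.induct) auto

lemma distinct_adj_reroute:
  "k \<notin> {a, b} \<Longrightarrow> distinct_adj p \<Longrightarrow> distinct_adj (reroute a b k p)"
proof (induction a b k p rule: reroute.induct)
  case (1 a b k u v p)
  obtain r where "reroute a b k (v # p) = v # r" by (rule reroute_ConsE)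
  with 1 show ?case by (auto simp: doubleton_eq_iff)
qed simp_all

lemma traversals_reroute:
  assumes "a \<noteq> b" "k \<noteq> a" "k \<noteq> b"
  shows "real (traversals (reroute a b k p) g)
       = real (traversals p g) + real (traversals p {a, b}) * detour {a, b} k g"
proof (induction p rule: induct_list012)
  case (3 u v p)
  obtain r where r: "reroute a b k (v # p) = v # r" by (rule reroute_ConsE)
  show ?case
  proof (cases "{u, v} = {a, b}")
    case True
    then have "of_bool (g = {u, k}) + of_bool (g = {k, v}) = detour {a, b} k g + (of_bool (g = {a, b}) :: real)"
      using assms by (auto simp: detour_doubleton doubleton_eq_iff)
    with True show ?thesis
      using "3.IH"(2) r by (simp add: algebra_simps)
  next
    case False
    then show ?thesis
      using "3.IH"(2) r by (simp add: algebra_simps)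
  qed
qed simp_all

lemma closed_walk_reroute:
  assumes "closed_walk V p" "k \<in> V" "k \<notin> {a, b}"
  shows "closed_walk V (reroute a b k p)"
proof -
  have walk: "p \<noteq> []" "hd p = last p" "distinct_adj p" "set p = V"
    using assms(1) unfolding closed_walk_def by auto
  have "hd (reroute a b k p) = last (reroute a b k p)"
    using walk(2) last_reroute[OF walk(1)] hd_reroute[of a b k p] by simp
  moreover have "set (reroute a b k p) = V"
    using set_reroute[of p a b k] walk(4) assms(2) by blast
  ultimately show ?thesis
    using distinct_adj_reroute[OF assms(3) walk(3)] walk(1,4) unfolding closed_walk_def by auto
qed

definition walk_family :: "'a set \<Rightarrow> (real \<times> 'a list) list \<Rightarrow> bool" where
  "walk_family V L \<longleftrightarrow> (\<forall>(c, p)\<in>set L. 0 \<le> c \<and> closed_walk V p)"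

definition family_weight :: "(real \<times> 'a list) list \<Rightarrow> real" where
  "family_weight L = (\<Sum>(c, p)\<leftarrow>L. c)"

definition family_load :: "(real \<times> 'a list) list \<Rightarrow> 'a set \<Rightarrow> real" where
  "family_load L g = (\<Sum>(c, p)\<leftarrow>L. c * real (traversals p g))"

lemma family_load_nonneg: "walk_family V L \<Longrightarrow> 0 \<le> family_load L g"
  unfolding walk_family_def family_load_def by (induction L) auto

lemma family_load_member_le:
  "walk_family V L \<Longrightarrow> (c, p) \<in> set L \<Longrightarrow> c * real (traversals p g) \<le> family_load L g"
  unfolding family_load_def walk_family_def
  by (rule member_le_sum_list) (auto intro!: image_eqI[of _ _ "(c, p)"])

definition reroute_family :: "real \<Rightarrow> 'a \<Rightarrow> 'a \<Rightarrow> 'a \<Rightarrow> (real \<times> 'a list) list \<Rightarrow> (real \<times> 'a list) list" where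
  "reroute_family \<alpha> a b k L = map (\<lambda>(c, p). ((1 - \<alpha>) * c, p)) L @ map (\<lambda>(c, p). (\<alpha> * c, reroute a b k p)) L"

lemma walk_family_reroute_family:
  "walk_family V L \<Longrightarrow> k \<in> V \<Longrightarrow> k \<notin> {a, b} \<Longrightarrow> 0 \<le> \<alpha> \<Longrightarrow> \<alpha> \<le> 1 \<Longrightarrow> walk_family V (reroute_family \<alpha> a b k L)"
  using closed_walk_reroute unfolding walk_family_def reroute_family_def by fastforce

lemma family_weight_reroute_family: "family_weight (reroute_family \<alpha> a b k L) = family_weight L"
  unfolding family_weight_def reroute_family_def by (induction L) (auto simp: algebra_simps)

lemma family_load_reroute_family:
  assumes "a \<noteq> b" "k \<notin> {a, b}"
  shows "family_load (reroute_family \<alpha> a b k L) g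
       = family_load L g + \<alpha> * family_load L {a, b} * detour {a, b} k g"
  using assms unfolding family_load_def reroute_family_def
  by (induction L) (auto simp: traversals_reroute algebra_simps)

lemma reroute_load:
  assumes "walk_family {..<n} L" "(e, k) \<in> shortcut_indices n" "0 \<le> \<delta>" "\<delta> \<le> family_load L e"
  obtains L' where "walk_family {..<n} L'" "family_weight L' = family_weight L"
    "\<And>g. family_load L' g = family_load L g + \<delta> * detour e k g"
proof -
  have "e \<in> edges n" and k: "k < n" "k \<notin> e"
    using assms(2) by (auto simp: shortcut_indices_def)
  then obtain a b where ab: "e = {a, b}" "a \<noteq> b"
    by (elim edgesE) simp
  \<comment> \<open>if \<open>family_load L e = 0\<close> then \<open>\<delta> = 0\<close>, so the junk value \<open>\<delta> / 0 = 0\<close> is harmless\<close>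
  define \<alpha> where "\<alpha> = \<delta> / family_load L e"
  have \<alpha>: "0 \<le> \<alpha>" "\<alpha> \<le> 1" "\<alpha> * family_load L e = \<delta>"
    using assms(3,4) by (auto simp: \<alpha>_def divide_le_eq_1)
  have "k \<notin> {a, b}" using k(2) ab(1) by simp
  show thesis
  proof (rule that)
    show "walk_family {..<n} (reroute_family \<alpha> a b k L)"
      using assms(1) k(1) \<open>k \<notin> {a, b}\<close> \<alpha> by (intro walk_family_reroute_family) auto
    show "family_weight (reroute_family \<alpha> a b k L) = family_weight L"
      by (rule family_weight_reroute_family)
    show "family_load (reroute_family \<alpha> a b k L) g = family_load L g + \<delta> * detour e k g" for g
      using family_load_reroute_family[OF ab(2) \<open>k \<notin> {a, b}\<close>] \<alpha>(3) unfolding ab(1) by simp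
  qed
qed

section \<open>Eliminating the shortcut variables\<close>

text \<open>
  Reroute as much of the walks' use of \<open>e\<close> through \<open>k\<close> as \<open>l e k\<close> allows, then drop \<open>l e k\<close>.
  If all of it can be rerouted, the load left on \<open>e\<close> is nonpositive, because no remaining active
  shortcut produces \<open>e\<close>.
\<close>

lemma eliminate_unproduced_shortcut:
  assumes x: "\<forall>g\<in>edges n. 0 \<le> x g" and l: "shortcut_nonneg n l" and L: "walk_family {..<n} L"
    and feasible: "\<forall>g\<in>edges n. family_load L g + shortcut_load n l g \<le> x g"
    and active: "(e, k) \<in> active_shortcuts n l"
    and unproduced: "\<forall>(e', k')\<in>active_shortcuts n l. e \<notin> detour_edges e' k'"
  obtains l' L' where "shortcut_nonneg n l'" "active_shortcuts n l' \<subset> active_shortcuts n l"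
    "walk_family {..<n} L'" "family_weight L' = family_weight L"
    "\<forall>g\<in>edges n. family_load L' g + shortcut_load n l' g \<le> x g"
proof -
  have ek: "(e, k) \<in> shortcut_indices n" "0 < l e k"
    using active by (auto simp: active_shortcuts_def)
  define l' where "l' e' k' = l e' k' - l e k * of_bool ((e', k') \<in> {(e, k)})" for e' k'
  have load_l': "shortcut_load n l' g = shortcut_load n l g - l e k * detour e k g" for g
    using shortcut_load_subtract[of "{(e, k)}" n l "l e k" g] ek(1) unfolding l'_def by simp
  have l': "shortcut_nonneg n l'"
    using l by (auto simp: shortcut_nonneg_def l'_def)
  have active_l': "active_shortcuts n l' = active_shortcuts n l - {(e, k)}"
    by (auto simp: active_shortcuts_def l'_def)
  define \<delta> where "\<delta> = min (l e k) (family_load L e)"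
  have "0 \<le> \<delta>" "\<delta> \<le> family_load L e"
    using ek(2) family_load_nonneg[OF L] by (auto simp: \<delta>_def)
  then obtain L' where L': "walk_family {..<n} L'" "family_weight L' = family_weight L"
    "\<And>g. family_load L' g = family_load L g + \<delta> * detour e k g"
    using reroute_load[OF L ek(1)] by blast
  have "family_load L' g + shortcut_load n l' g \<le> x g" if g: "g \<in> edges n" for g
  proof (cases "g = e")
    case True
    have "detour e k e = -1"
      using ek(1) by (auto simp: detour_def detour_edges_def shortcut_indices_def)
    moreover have "shortcut_load n l' e \<le> 0"
      using l' unproduced active_l' by (intro shortcut_load_nonpos_if_unproduced) auto
    ultimately show ?thesis
      using True feasible g x load_l' L'(3) by (auto simp: \<delta>_def min_def)
  next
    case False
    then have "\<delta> * detour e k g \<le> l e k * detour e k g"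
      by (intro mult_right_mono) (simp_all add: \<delta>_def detour_def)
    then show ?thesis
      using feasible g load_l' L'(3) by fastforce
  qed
  moreover have "active_shortcuts n l' \<subset> active_shortcuts n l"
    using active active_l' by auto
  ultimately show thesis
    using that l' L'(1,2) by blast
qed

lemma finite_self_map_invariant_subset:
  assumes "finite P" "P \<noteq> {}" "f ` P \<subseteq> P"
  shows "\<exists>C\<subseteq>P. C \<noteq> {} \<and> f ` C = C"
  using assms
proof (induction P rule: finite_psubset_induct)
  case (psubset P)
  show ?case
  proof (cases "f ` P = P")
    case False
    then have "f ` P \<subset> P" "f ` P \<noteq> {}" "f ` f ` P \<subseteq> f ` P"
      using psubset.prems by auto
    then show ?thesis
      using psubset.IH by (meson order.trans psubset_imp_subset)
  qed (use psubset.prems in blast)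
qed

lemma sum_detour_nonneg_if_cyclic:
  assumes "finite C" "f ` C = C" "\<forall>s\<in>C. fst s \<in> detour_edges (fst (f s)) (snd (f s))"
  shows "0 \<le> (\<Sum>(e, k)\<in>C. detour e k g)"
proof -
  have "inj_on f C"
    using eq_card_imp_inj_on[OF assms(1), of f] assms(2) by simp
  have "(\<Sum>s\<in>C. of_bool (g = fst s)) \<le> (\<Sum>s\<in>C. of_bool (g \<in> detour_edges (fst (f s)) (snd (f s))) :: real)"
    using assms(3) by (intro sum_mono) auto
  also have "\<dots> = (\<Sum>s\<in>C. of_bool (g \<in> detour_edges (fst s) (snd s)))"
    using sum.reindex[OF \<open>inj_on f C\<close>, of "\<lambda>s. of_bool (g \<in> detour_edges (fst s) (snd s)) :: real"]
    by (simp add: assms(2) o_def)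
  finally show ?thesis
    by (simp add: detour_def case_prod_beta sum_subtractf)
qed

text \<open>
  If every active shortcut's edge is a detour edge of another active shortcut, following this relation
  gives a cycle of active shortcuts; lowering them all by their minimum removes at least one of them
  and lowers the load, since along the cycle each unit taken off an edge was also put on it.
\<close>

lemma cancel_shortcut_cycle:
  assumes l: "shortcut_nonneg n l" and nonempty: "active_shortcuts n l \<noteq> {}"
    and produced: "\<forall>(e, k)\<in>active_shortcuts n l. \<exists>(e', k')\<in>active_shortcuts n l. e \<in> detour_edges e' k'"
  obtains l' where "shortcut_nonneg n l'" "active_shortcuts n l' \<subset> active_shortcuts n l"
    "\<forall>g. shortcut_load n l' g \<le> shortcut_load n l g"
proof -
  let ?A = "active_shortcuts n l" and ?l = "\<lambda>(e, k). l e k"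
  obtain f where f: "\<forall>s\<in>?A. f s \<in> ?A \<and> fst s \<in> detour_edges (fst (f s)) (snd (f s))"
    using bchoice[of ?A "\<lambda>s s'. s' \<in> ?A \<and> fst s \<in> detour_edges (fst s') (snd s')"] produced by fastforce
  have "f ` ?A \<subseteq> ?A" using f by blast
  from finite_self_map_invariant_subset[OF finite_active_shortcuts nonempty this]
  obtain C where C: "C \<subseteq> ?A" "C \<noteq> {}" "f ` C = C" by blast
  have "finite C" using C(1) finite_active_shortcuts finite_subset by blast
  define \<epsilon> where "\<epsilon> = Min (?l ` C)"
  have "\<epsilon> \<in> ?l ` C"
    unfolding \<epsilon>_def using \<open>finite C\<close> C(2) by (intro Min_in) auto
  then obtain s1 where s1: "s1 \<in> C" "\<epsilon> = ?l s1" by blast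
  have \<epsilon>_le: "\<epsilon> \<le> l e k" if "(e, k) \<in> C" for e k
    unfolding \<epsilon>_def using \<open>finite C\<close> that by (auto intro: Min_le)
  have "0 < \<epsilon>" using s1 C(1) by (auto simp: active_shortcuts_def)
  define l' where "l' e k = l e k - \<epsilon> * of_bool ((e, k) \<in> C)" for e k
  have "shortcut_nonneg n l'"
    using l \<epsilon>_le by (fastforce simp: shortcut_nonneg_def l'_def)
  moreover have "active_shortcuts n l' \<subseteq> ?A - {s1}"
    using s1 \<open>0 < \<epsilon>\<close> by (auto simp: active_shortcuts_def l'_def split: if_splits)
  then have "active_shortcuts n l' \<subset> ?A"
    using s1(1) C(1) by blast
  moreover have "shortcut_load n l' g \<le> shortcut_load n l g" for g
  proof -
    have "C \<subseteq> shortcut_indices n" using C(1) by (auto simp: active_shortcuts_def)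
    then have "shortcut_load n l' g = shortcut_load n l g - \<epsilon> * (\<Sum>(e, k)\<in>C. detour e k g)"
      unfolding l'_def by (rule shortcut_load_subtract)
    moreover have "0 \<le> (\<Sum>(e, k)\<in>C. detour e k g)"
      using \<open>finite C\<close> C f by (intro sum_detour_nonneg_if_cyclic[of C f]) auto
    ultimately show ?thesis using \<open>0 < \<epsilon>\<close> by simp
  qed
  ultimately show thesis using that by blast
qed

lemma eliminate_shortcuts:
  assumes "\<forall>g\<in>edges n. 0 \<le> x g" "shortcut_nonneg n l" "walk_family {..<n} L"
    and "\<forall>g\<in>edges n. family_load L g + shortcut_load n l g \<le> x g"
  shows "\<exists>L'. walk_family {..<n} L' \<and> family_weight L' = family_weight L
    \<and> (\<forall>g\<in>edges n. family_load L' g \<le> x g)"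
  using assms(2-4)
proof (induction "card (active_shortcuts n l)" arbitrary: l L rule: less_induct)
  case less
  let ?A = "active_shortcuts n l"
  have smaller: "card (active_shortcuts n l') < card ?A" if "active_shortcuts n l' \<subset> ?A" for l'
    using that finite_active_shortcuts by (rule psubset_card_mono[rotated])
  consider "?A = {}"
    | e k where "(e, k) \<in> ?A" "\<forall>(e', k')\<in>?A. e \<notin> detour_edges e' k'"
    | "?A \<noteq> {}" "\<forall>(e, k)\<in>?A. \<exists>(e', k')\<in>?A. e \<in> detour_edges e' k'"
    by blast
  then show ?case
  proof cases
    case 1
    then show ?thesis
      using less.prems shortcut_load_eq_0_if_inactive by fastforce
  next
    case 2
    with eliminate_unproduced_shortcut[OF assms(1) less.prems] obtain l' L'
      where "shortcut_nonneg n l'" "active_shortcuts n l' \<subset> ?A" "walk_family {..<n} L'"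
        "family_weight L' = family_weight L" "\<forall>g\<in>edges n. family_load L' g + shortcut_load n l' g \<le> x g"
      by blast
    with less.hyps[OF smaller] show ?thesis by metis
  next
    case 3
    with cancel_shortcut_cycle[OF less.prems(1)] obtain l'
      where l': "shortcut_nonneg n l'" "active_shortcuts n l' \<subset> ?A"
        "\<forall>g. shortcut_load n l' g \<le> shortcut_load n l g"
      by blast
    have "\<forall>g\<in>edges n. family_load L g + shortcut_load n l' g \<le> x g"
      using less.prems(3) l'(3) by (meson add_left_mono order.trans)
    with less.hyps[OF smaller[OF l'(2)] l'(1) less.prems(2)] show ?thesis by blast
  qed
qed

section \<open>Traversing every edge at most twice\<close>

lemma arc_split:
  "Suc m \<le> count_list (zip p (tl p)) (a, b) \<Longrightarrow>
    \<exists>P Q. p = P @ a # b # Q \<and> m \<le> count_list (zip (b # Q) Q) (a, b)"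
proof (induction p rule: induct_list012)
  case (3 x y r)
  show ?case
  proof (cases "(x, y) = (a, b)")
    case True
    with "3.prems" show ?thesis by (intro exI[of _ "[]"] exI[of _ r]) auto
  next
    case False
    with "3.prems" "3.IH"(2) obtain P Q where "y # r = P @ a # b # Q" "m \<le> count_list (zip (b # Q) Q) (a, b)"
      by auto
    then show ?thesis by (intro exI[of _ "x # P"] exI[of _ Q]) auto
  qed
qed auto

lemma two_arcs_split:
  assumes "2 \<le> count_list (zip p (tl p)) (a, b)" "a \<noteq> b"
  obtains P0 P1 P2 where "p = P0 @ a # b # P1 @ a # b # P2"
proof -
  obtain P0 Q where p: "p = P0 @ a # b # Q" "1 \<le> count_list (zip (b # Q) Q) (a, b)"
    using arc_split[of 1 p a b] assms(1) by auto
  then obtain R P2 where "b # Q = R @ a # b # P2"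
    using arc_split[of 0 "b # Q" a b] by auto
  moreover from this obtain P1 where "R = b # P1"
    using assms(2) by (cases R) auto
  ultimately show thesis using that p(1) by auto
qed

lemma traversals_doubleton_conv_arcs:
  "a \<noteq> b \<Longrightarrow> traversals p {a, b} = count_list (zip p (tl p)) (a, b) + count_list (zip p (tl p)) (b, a)"
  by (induction p rule: induct_list012) (auto simp: doubleton_eq_iff)

lemma repeated_arc:
  assumes "distinct_adj p" "3 \<le> traversals p g"
  obtains a b P0 P1 P2 where "p = P0 @ a # b # P1 @ a # b # P2"
proof -
  have "g \<in> set (path_edges p)"
    using assms(2) count_list_0_iff[of "path_edges p" g] by (auto simp: traversals_def)
  then obtain u v where uv: "u \<noteq> v" "g = {u, v}"
    using path_edge_doubleton[OF assms(1)] by blast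
  then have "2 \<le> count_list (zip p (tl p)) (u, v) \<or> 2 \<le> count_list (zip p (tl p)) (v, u)"
    using assms(2) traversals_doubleton_conv_arcs[OF uv(1), of p] unfolding uv(2) by linarith
  then show thesis
    using two_arcs_split that uv(1) by metis
qed

text \<open>
  Of two traversals \<open>a b\<close> in the same direction, \<open>P0 a b P1 a b P2\<close>, both are removed by reversing
  the segment in between: \<open>P0 a (rev P1) b P2\<close> visits the same nodes.
\<close>

lemma traversals_reverse_between:
  "traversals (P0 @ a # b # P1 @ a # b # P2) h = traversals (P0 @ a # rev P1 @ b # P2) h + 2 * of_bool (h = {a, b})"
proof -
  have "traversals (a # rev P1 @ [b]) = traversals (b # P1 @ [a])"
    using traversals_rev[of "b # P1 @ [a]"] by simp
  then show ?thesis
    using traversals_append[of "b # P1" a b P2 h] traversals_append_Cons[of P0 a "rev P1 @ b # P2" h]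
      traversals_append_Cons[of "a # rev P1" b P2 h]
    by simp
qed

lemma distinct_adj_reverse_between:
  assumes "distinct_adj (P0 @ a # b # P1 @ a # b # P2)"
  shows "distinct_adj (P0 @ a # rev P1 @ b # P2)"
proof -
  have "distinct_adj (P0 @ [a])" "distinct_adj (b # P1 @ [a])" "distinct_adj (b # P2)"
    using assms distinct_adj_append_Cons[of P0 a "b # P1 @ a # b # P2"]
      distinct_adj_append_Cons[of "b # P1" a "b # P2"]
    by (auto dest: distinct_adj_ConsD)
  moreover have "distinct_adj (a # rev P1 @ [b]) = distinct_adj (b # P1 @ [a])"
    using distinct_adj_rev[of "b # P1 @ [a]"] by simp
  ultimately show ?thesis
    using distinct_adj_append_Cons[of P0 a "rev P1 @ b # P2"] distinct_adj_append_Cons[of "a # rev P1" b P2]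
    by simp
qed

lemma closed_walk_shorten:
  assumes "closed_walk V p" "3 \<le> traversals p g"
  obtains p' where "closed_walk V p'" "length p' < length p" "\<forall>h. traversals p' h \<le> traversals p h"
proof -
  have "distinct_adj p" using assms(1) unfolding closed_walk_def by blast
  then obtain a b P0 P1 P2 where p: "p = P0 @ a # b # P1 @ a # b # P2"
    using assms(2) by (rule repeated_arc)
  define p' where "p' = P0 @ a # rev P1 @ b # P2"
  have "distinct_adj p'"
    using \<open>distinct_adj p\<close> unfolding p p'_def by (rule distinct_adj_reverse_between)
  moreover have "hd p' = hd p" "last p' = last p" "set p' = set p"
    unfolding p p'_def by (cases P0; cases P2; auto)+
  ultimately have "closed_walk V p'"
    using assms(1) unfolding closed_walk_def p'_def by auto
  moreover have "length p' < length p"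
    unfolding p p'_def by simp
  moreover have "traversals p' h \<le> traversals p h" for h
    unfolding p p'_def traversals_reverse_between[of P0 a b P1 P2 h] by simp
  ultimately show thesis using that by blast
qed

lemma closed_walk_reduce:
  assumes "closed_walk V p"
  shows "\<exists>p'. closed_walk V p' \<and> (\<forall>g. traversals p' g \<le> traversals p g) \<and> (\<forall>g. traversals p' g \<le> 2)"
  using assms
proof (induction "length p" arbitrary: p rule: less_induct)
  case less
  show ?case
  proof (cases "\<exists>g. 3 \<le> traversals p g")
    case True
    then obtain p' where "closed_walk V p'" "length p' < length p" "\<forall>h. traversals p' h \<le> traversals p h"
      using closed_walk_shorten[OF less.prems] by blast
    with less.hyps show ?thesis by (meson order.trans)
  next
    case False
    have "traversals p g \<le> 2" for g
      using False not_le[of 3 "traversals p g"] by auto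
    with less.prems show ?thesis by blast
  qed
qed

lemma tour_weights_as_walk_family:
  assumes "3 \<le> n" "\<forall>t\<in>tours n. 0 \<le> \<mu> t"
  obtains L where "walk_family {..<n} L" "family_weight L = (\<Sum>t\<in>tours n. \<mu> t)"
    "\<And>g. family_load L g = (\<Sum>t\<in>{t \<in> tours n. g \<in> t}. \<mu> t)"
proof -
  have "\<exists>q. distinct q \<and> set q = {..<n} \<and> t = set (path_edges (q @ [hd q]))" if "t \<in> tours n" for t
    using that unfolding tours_iff by blast
  then obtain Q where Q: "\<And>t. t \<in> tours n \<Longrightarrow> distinct (Q t) \<and> set (Q t) = {..<n}
      \<and> t = set (path_edges (Q t @ [hd (Q t)]))"
    by metis
  obtain ts where ts: "set ts = tours n" "distinct ts"
    using finite_distinct_list[OF finite_tours] by blast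
  define L where "L = map (\<lambda>t. (\<mu> t, Q t @ [hd (Q t)])) ts"
  have "walk_family {..<n} L"
    using Q assms ts(1) by (auto simp: L_def walk_family_def intro!: closed_walk_Hamiltonian)
  moreover have "family_load L g = (\<Sum>t\<in>{t \<in> tours n. g \<in> t}. \<mu> t)" for g
  proof -
    have "traversals (Q t @ [hd (Q t)]) g = of_bool (g \<in> t)" if "t \<in> tours n" for t
      using Q[OF that] distinct_card[of "Q t"] traversals_Hamiltonian[of "Q t" g] assms(1) by auto
    then have "family_load L g = (\<Sum>t\<in>tours n. \<mu> t * of_bool (g \<in> t))"
      using ts by (simp add: family_load_def L_def sum_list_distinct_conv_sum_set)
    then show ?thesis by (auto simp: sum.inter_filter[OF finite_tours] intro!: sum.cong)
  qed
  moreover have "family_weight L = (\<Sum>t\<in>tours n. \<mu> t)"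
    using ts by (simp add: family_weight_def L_def sum_list_distinct_conv_sum_set)
  ultimately show thesis using that by blast
qed

lemma walk_in_support_walks:
  assumes "2 \<le> n" "walk_family {..<n} L" "\<forall>g\<in>edges n. family_load L g \<le> x g"
    and "(c, p) \<in> set L" "0 < c"
    and "closed_walk {..<n} p'" "\<forall>g. traversals p' g \<le> traversals p g" "\<forall>g. traversals p' g \<le> 2"
  shows "traversals p' \<in> walks n (support x n)"
proof -
  have "g \<in> support x n" if g: "g \<in> set (path_edges p')" for g
  proof -
    have "g \<in> edges n"
      using assms(6) g path_edges_subset_edges[of p' n] by (auto simp: closed_walk_def)
    have "0 < traversals p' g"
      using g count_list_0_iff[of "path_edges p'" g] by (simp add: traversals_def)
    then have "0 < c * real (traversals p g)"
      using assms(5,7) by (simp add: less_le_trans)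
    also have "\<dots> \<le> family_load L g" by (rule family_load_member_le[OF assms(2,4)])
    also have "\<dots> \<le> x g" using assms(3) \<open>g \<in> edges n\<close> by blast
    finally show "g \<in> support x n" using \<open>g \<in> edges n\<close> by (simp add: support_def)
  qed
  then show ?thesis
    using walk_of_closed_walk[OF assms(6,1) _ assms(8)] by blast
qed

lemma walk_weights_of_walk_family:
  assumes "2 \<le> n" "walk_family {..<n} L" "\<forall>g\<in>edges n. family_load L g \<le> x g"
  shows "\<exists>\<mu>'. family_weight L = (\<Sum>w\<in>walks n (support x n). \<mu>' w)
    \<and> (\<forall>w\<in>walks n (support x n). 0 \<le> \<mu>' w)
    \<and> (\<forall>e\<in>support x n. (\<Sum>w\<in>walks n (support x n). real (w e) * \<mu>' w) \<le> x e)"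
proof -
  let ?W = "walks n (support x n)"
  define R where "R p = (SOME p'. closed_walk {..<n} p' \<and> (\<forall>g. traversals p' g \<le> traversals p g)
      \<and> (\<forall>g. traversals p' g \<le> 2))" for p
  have R: "closed_walk {..<n} (R p)" "\<forall>g. traversals (R p) g \<le> traversals p g" "\<forall>g. traversals (R p) g \<le> 2"
    if "closed_walk {..<n} p" for p
    using someI_ex[OF closed_walk_reduce[OF that]] unfolding R_def by blast+
  \<comment> \<open>members of weight \<open>0\<close> may use edges outside the support\<close>
  define Lp where "Lp = filter (\<lambda>(c, p). 0 < c) L"
  have "traversals (R p) \<in> ?W" if "(c, p) \<in> set Lp" for c p
  proof -
    have cp: "(c, p) \<in> set L" "0 < c" using that by (auto simp: Lp_def)
    then have "closed_walk {..<n} p" using assms(2) by (auto simp: walk_family_def)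
    from walk_in_support_walks[OF assms cp R[OF this]] show ?thesis .
  qed
  then have "\<forall>y\<in>set Lp. (\<lambda>(c, p). traversals (R p)) y \<in> ?W" by auto
  moreover have "finite ?W" by (rule finite_walks) (simp add: support_def finite_edges)
  moreover define \<mu>' where "\<mu>' w = (\<Sum>(c, p)\<leftarrow>Lp. if traversals (R p) = w then c else 0)" for w
  ultimately have pushforward: "(\<Sum>w\<in>?W. F w * \<mu>' w) = (\<Sum>(c, p)\<leftarrow>Lp. c * F (traversals (R p)))" for F
    using sum_list_pushforward[where c = fst and F = F] by (simp add: \<mu>'_def split_def)
  have drop_weightless: "(\<Sum>(c, p)\<leftarrow>Lp. c * f p) = (\<Sum>(c, p)\<leftarrow>L. c * f p)" for f :: "nat list \<Rightarrow> real"
    unfolding Lp_def using assms(2) by (intro sum_list_map_filter) (auto simp: walk_family_def)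
  have "family_weight L = (\<Sum>w\<in>?W. \<mu>' w)"
    using pushforward[of "\<lambda>_. 1"] drop_weightless[of "\<lambda>_. 1"] by (simp add: family_weight_def)
  moreover have "\<forall>w\<in>?W. 0 \<le> \<mu>' w"
    unfolding \<mu>'_def Lp_def by (auto intro!: sum_list_nonneg)
  moreover have "(\<Sum>w\<in>?W. real (w e) * \<mu>' w) \<le> x e" if "e \<in> support x n" for e
  proof -
    have "(\<Sum>w\<in>?W. real (w e) * \<mu>' w) = (\<Sum>(c, p)\<leftarrow>Lp. c * real (traversals (R p) e))"
      by (rule pushforward)
    also have "\<dots> \<le> (\<Sum>(c, p)\<leftarrow>Lp. c * real (traversals p e))"
      using R(2) assms(2) by (intro sum_list_mono) (auto simp: Lp_def walk_family_def)
    also have "\<dots> = family_load L e"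
      unfolding family_load_def by (rule drop_weightless)
    also have "\<dots> \<le> x e"
      using assms(3) that by (simp add: support_def)
    finally show ?thesis .
  qed
  ultimately show ?thesis by blast
qed

lemma DOPT_II_solution_of_DOPT_plus:
  assumes n: "3 \<le> n" and x: "\<forall>e\<in>edges n. 0 \<le> x e"
    and lam: "\<forall>e\<in>edges n. \<forall>k<n. k \<notin> e \<longrightarrow> 0 \<le> lam e k" and \<mu>: "\<forall>t\<in>tours n. 0 \<le> \<mu> t"
    and feasible: "\<forall>i<n. \<forall>j<n. i \<noteq> j \<longrightarrow>
           (\<Sum>k\<in>{..<n} - {i, j}. - lam {i, j} k + lam {i, k} j + lam {j, k} i)
           + (\<Sum>t\<in>{t \<in> tours n. {i, j} \<in> t}. \<mu> t) \<le> x {i, j}"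
  shows "\<exists>\<mu>'. (\<Sum>t\<in>tours n. \<mu> t) = (\<Sum>w\<in>walks n (support x n). \<mu>' w)
      \<and> (\<forall>w\<in>walks n (support x n). 0 \<le> \<mu>' w)
      \<and> (\<forall>e\<in>support x n. (\<Sum>w\<in>walks n (support x n). real (w e) * \<mu>' w) \<le> x e)"
proof -
  obtain L where L: "walk_family {..<n} L" "family_weight L = (\<Sum>t\<in>tours n. \<mu> t)"
    "\<And>g. family_load L g = (\<Sum>t\<in>{t \<in> tours n. g \<in> t}. \<mu> t)"
    using tour_weights_as_walk_family[OF n \<mu>] by blast
  have "family_load L g + shortcut_load n lam g \<le> x g" if "g \<in> edges n" for g
  proof -
    from that obtain i j where g: "g = {i, j}" and ij: "i < n" "j < n" "i \<noteq> j" by (rule edgesE)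
    show ?thesis
      using feasible[rule_format, OF ij] shortcut_load_doubleton[OF ij, of lam] L(3)[of g]
      unfolding g by linarith
  qed
  then obtain L' where L': "walk_family {..<n} L'" "family_weight L' = family_weight L"
    "\<forall>g\<in>edges n. family_load L' g \<le> x g"
    using eliminate_shortcuts[OF x _ L(1)] lam unfolding shortcut_nonneg_def by blast
  have "2 \<le> n" using n by simp
  from walk_weights_of_walk_family[OF this L'(1,3)] show ?thesis
    unfolding L'(2) L(2) .
qed

lemma DOPT_plus_solution_of_DOPT_II:
  assumes n: "3 \<le> n" and x: "\<forall>e\<in>edges n. 0 \<le> x e"
    and \<mu>: "\<forall>w\<in>walks n (support x n). 0 \<le> \<mu> w"
    and feasible: "\<forall>e\<in>support x n. (\<Sum>w\<in>walks n (support x n). real (w e) * \<mu> w) \<le> x e"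
  shows "\<exists>lam \<mu>'. (\<Sum>w\<in>walks n (support x n). \<mu> w) = (\<Sum>t\<in>tours n. \<mu>' t)
      \<and> (\<forall>e\<in>edges n. \<forall>k<n. k \<notin> e \<longrightarrow> 0 \<le> lam e k) \<and> (\<forall>t\<in>tours n. 0 \<le> \<mu>' t)
      \<and> (\<forall>i<n. \<forall>j<n. i \<noteq> j \<longrightarrow>
           (\<Sum>k\<in>{..<n} - {i, j}. - lam {i, j} k + lam {i, k} j + lam {j, k} i)
           + (\<Sum>t\<in>{t \<in> tours n. {i, j} \<in> t}. \<mu>' t) \<le> x {i, j})"
proof -
  let ?W = "walks n (support x n)"
  have E: "finite (support x n)" "support x n \<subseteq> edges n"
    by (auto simp: support_def finite_edges)
  obtain \<mu>' where \<mu>': "\<forall>t\<in>tours n. 0 \<le> \<mu>' t" "(\<Sum>w\<in>?W. \<mu> w) = (\<Sum>t\<in>tours n. \<mu>' t)"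
    and shortcut: "shortcut_le n (\<lambda>g. \<Sum>t\<in>{t \<in> tours n. g \<in> t}. \<mu>' t) (\<lambda>g. \<Sum>w\<in>?W. \<mu> w * real (w g))"
    using walk_weights_shortcut_to_tours[OF E n \<mu>] by blast
  have "shortcut_le n (\<lambda>g. \<Sum>w\<in>?W. \<mu> w * real (w g)) x"
  proof (rule shortcut_le_of_le)
    fix g assume "g \<in> edges n"
    show "(\<Sum>w\<in>?W. \<mu> w * real (w g)) \<le> x g"
    proof (cases "g \<in> support x n")
      case True
      then show ?thesis using feasible by (simp add: mult.commute)
    next
      case False
      then have "(\<Sum>w\<in>?W. \<mu> w * real (w g)) = 0"
        by (intro sum.neutral) (simp add: walk_vanishes_outside)
      then show ?thesis using x \<open>g \<in> edges n\<close> by simp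
    qed
  qed
  from shortcut_le_trans[OF shortcut this] obtain lam where lam: "shortcut_nonneg n lam"
    "\<forall>g\<in>edges n. (\<Sum>t\<in>{t \<in> tours n. g \<in> t}. \<mu>' t) + shortcut_load n lam g \<le> x g"
    unfolding shortcut_le_def by blast
  have "(\<Sum>k\<in>{..<n} - {i, j}. - lam {i, j} k + lam {i, k} j + lam {j, k} i)
      + (\<Sum>t\<in>{t \<in> tours n. {i, j} \<in> t}. \<mu>' t) \<le> x {i, j}" if "i < n" "j < n" "i \<noteq> j" for i j
    using lam(2) shortcut_load_doubleton[OF that, of lam] that doubleton_in_edges_iff[of i j n] by fastforce
  then show ?thesis
    using lam(1) \<mu>' unfolding shortcut_nonneg_def by blast
qed

theorem mainTheorem6:
  fixes n :: nat and x :: "nat set \<Rightarrow> real"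
  assumes "3 \<le> n"
    and "is_vertex (P_SEP n) x"
  shows "DOPT_plus n x = DOPT_II n x"
proof -
  have x: "\<forall>e\<in>edges n. 0 \<le> x e"
    using assms(2) by (simp add: is_vertex_def P_SEP_def)
  show ?thesis
    unfolding DOPT_plus_def DOPT_II_def
  proof ((intro arg_cong[where f = Sup] set_eqI iffI; elim CollectE exE conjE), goal_cases)
    case (1 z lam \<mu>)
    show ?case
      using DOPT_II_solution_of_DOPT_plus[OF assms(1) x 1(2-4)] unfolding 1(1) mem_Collect_eq ereal.inject .
  next
    case (2 z \<mu>)
    show ?case
      using DOPT_plus_solution_of_DOPT_II[OF assms(1) x 2(2,3)] unfolding 2(1) mem_Collect_eq ereal.inject .
  qed
qed

end
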